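(* Let $f$ be a $C^1$ expanding map of $\mathbf{S}^1$ and $m\ge0$. Denote by $\operatorname{Leb}_N$ the uniform probability measure on $E_N$. Then, as $N\to+\infty$, the measures $((f_N)_* )^m(\operatorname{Leb}_N)$ converge in the weak-* topology to the probability measure on $\mathbf{S}^1$ with density $\mathcal L_f^m1$ with respect to Lebesgue measure, where $1$ is the constant function equal to $1$.
   Context: $\mathbf{S}^1=\mathbf{R}/\mathbf{Z}$; a $C^1$ expanding map is a $C^1$ map $f:\mathbf{S}^1\to\mathbf{S}^1$ with $f'(x)>1$ for every $x$ (for the map $\mathcal D^1$ convention, $f'\ge1$). $E_N=\{i/N:1\le i\le N\}$, $P_N$ sends $x$ to a closest point of $E_N$, $f_N=P_N\circ f|_{E_N}$, and $(f_N)_*$ denotes push-forward of measures by $f_N$. $\mathcal L_f\phi(y)=\sum_{x\in f^{-1}(y)}\phi(x)/f'(x)$ is the transfer operator. *)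

theory Defs
  imports "HOL-Analysis.Analysis"
begin

text \<open>The circle S^1 = R/Z is represented by real numbers modulo 1.
  A map f of S^1 is given by a lift F :: real => real with F(x+1) = F x + d, d integer.
  Functions on S^1 are 1-periodic real functions.\<close>

definition dist_S1 :: "real \<Rightarrow> real \<Rightarrow> real" where
  "dist_S1 x y = (INF k::int. \<bar>x - y - real_of_int k\<bar>)"

definition E :: "nat \<Rightarrow> real set" where
  "E N = {real i / real N | i. 1 \<le> i \<and> i \<le> N}"

definition is_projection :: "(nat \<Rightarrow> real \<Rightarrow> real) \<Rightarrow> bool" where
  "is_projection P \<longleftrightarrow> (\<forall>N\<ge>1. \<forall>x. P N x \<in> E N \<and> (\<forall>e\<in>E N. dist_S1 x (P N x) \<le> dist_S1 x e))"

definition discretization :: "(real \<Rightarrow> real) \<Rightarrow> (nat \<Rightarrow> real \<Rightarrow> real) \<Rightarrow> nat \<Rightarrow> real \<Rightarrow> real" where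
  "discretization F P N x = P N (F x)"

definition C1_expanding_lift :: "(real \<Rightarrow> real) \<Rightarrow> (real \<Rightarrow> real) \<Rightarrow> bool" where
  "C1_expanding_lift F F' \<longleftrightarrow>
     (\<forall>x. (F has_real_derivative F' x) (at x)) \<and> continuous_on UNIV F' \<and>
     (\<forall>x. F' x > 1) \<and> (\<exists>d::int. \<forall>x. F (x + 1) = F x + real_of_int d)"

definition transfer :: "(real \<Rightarrow> real) \<Rightarrow> (real \<Rightarrow> real) \<Rightarrow> (real \<Rightarrow> real) \<Rightarrow> real \<Rightarrow> real" where
  "transfer F F' \<phi> y = (\<Sum>x\<in>{x. 0 \<le> x \<and> x < 1 \<and> F x - y \<in> \<int>}. \<phi> x / F' x)"

text \<open>Integral of phi against the uniform probability measure on E_N pushed forward m times by f_N.\<close>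
definition pushforward_integral :: "(real \<Rightarrow> real) \<Rightarrow> (nat \<Rightarrow> real \<Rightarrow> real) \<Rightarrow> nat \<Rightarrow> nat \<Rightarrow> (real \<Rightarrow> real) \<Rightarrow> real" where
  "pushforward_integral F P m N \<phi> =
     (\<Sum>i=1..N. \<phi> ((discretization F P N ^^ m) (real i / real N))) / real N"

end

theory Submission
  imports Defs
begin

text \<open>Pushing \<open>Leb_N\<close> forward \<open>m\<close> times integrates \<open>\<phi>\<close> to the Riemann-type sum
  \<open>(1/N) \<Sum>i. \<phi> (f_N^m (i/N))\<close>. The projection moves points by less than \<open>2/N\<close> and \<open>f\<close> is
  Lipschitz, so \<open>f_N^m\<close> stays within \<open>O(1/N)\<close> of \<open>f^m\<close> modulo 1; by uniform continuity of \<open>\<phi>\<close>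
  the sum is asymptotic to the Riemann sum of \<open>\<phi> \<circ> f^m\<close>, which tends to \<open>\<integral> \<phi> \<circ> f^m\<close>.
  This equals \<open>\<integral> \<phi> \<cdot> L_f^m 1\<close> because \<open>L_f\<close> is dual to composition with \<open>f\<close>: a change of
  variables along the inverse branches of the lift.\<close>

lemma periodic_shift_int:
  fixes g :: "real \<Rightarrow> 'b"
  assumes "\<And>x. g (x + p) = g x"
  shows "g (x + of_int k * p) = g x"
proof -
  have nat_shift: "g (y + real n * p) = g y" for y n
  proof (induction n)
    case (Suc n)
    have "g (y + real (Suc n) * p) = g ((y + real n * p) + p)" by (simp add: algebra_simps)
    also have "\<dots> = g (y + real n * p)" by (rule assms)
    finally show ?case using Suc by simp
  qed simp
  show ?thesis
  proof (cases "k \<ge> 0")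
    case True
    then obtain n where "k = int n" by (metis nonneg_int_cases)
    then show ?thesis using nat_shift by simp
  next
    case False
    define n where "n = nat (-k)"
    then have n: "k = - int n" using False by simp
    have "g (x + of_int k * p) = g (x + of_int k * p + real n * p)" using nat_shift by metis
    also have "\<dots> = g x" using n by simp
    finally show ?thesis .
  qed
qed

lemma periodic_frac:
  fixes g :: "real \<Rightarrow> 'b"
  assumes "\<And>x. g (x + 1) = g x"
  shows "g (frac x) = g x"
  using periodic_shift_int[of g 1 x "- \<lfloor>x\<rfloor>"] assms by (simp add: frac_def)

lemma periodic_uniform_modulus:
  fixes \<phi> :: "real \<Rightarrow> real"
  assumes cont: "continuous_on UNIV \<phi>" and per: "\<And>x. \<phi> (x + 1) = \<phi> x" and e: "e > 0"
  obtains \<delta> where "\<delta> > 0" "\<And>a b (k::int). \<bar>a - b - of_int k\<bar> < \<delta> \<Longrightarrow> \<bar>\<phi> a - \<phi> b\<bar> < e"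
proof -
  have "uniformly_continuous_on {-1..2} \<phi>"
    by (rule compact_uniformly_continuous) (auto intro: continuous_on_subset[OF cont])
  then obtain \<delta> where \<delta>: "\<delta> > 0"
    and uc: "\<And>x y. x \<in> {-1..2} \<Longrightarrow> y \<in> {-1..2} \<Longrightarrow> dist y x < \<delta> \<Longrightarrow> dist (\<phi> y) (\<phi> x) < e"
    unfolding uniformly_continuous_on_def using e by metis
  have "\<bar>\<phi> a - \<phi> b\<bar> < e" if close: "\<bar>a - b - of_int k\<bar> < min \<delta> 1" for a b k
  proof -
    define b' where "b' = frac a - (a - b - of_int k)"
    have "b' = b + of_int (k - \<lfloor>a\<rfloor>)" unfolding b'_def frac_def by simp
    then have "\<phi> b' = \<phi> b" using periodic_shift_int[of \<phi> 1 b "k - \<lfloor>a\<rfloor>"] per by simp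
    moreover have "0 \<le> frac a" "frac a < 1" by (simp_all add: frac_lt_1)
    with close have "frac a \<in> {-1..2}" "b' \<in> {-1..2}" "dist b' (frac a) < \<delta>"
      unfolding b'_def dist_real_def by (auto simp del: frac_ge_0)
    ultimately have "dist (\<phi> b) (\<phi> (frac a)) < e" using uc[of "frac a" b'] by simp
    then show ?thesis
      using periodic_frac[of \<phi>, OF per] by (simp add: dist_real_def abs_minus_commute)
  qed
  with \<delta> show thesis by (intro that[of "min \<delta> 1"]) auto
qed

lemma continuous_on_UNIV_integrable_on:
  "continuous_on UNIV (k::real \<Rightarrow> real) \<Longrightarrow> k integrable_on {a..b}"
  by (rule integrable_continuous_real) (auto intro: continuous_on_subset)

lemma integral_consecutive_intervals:
  fixes k :: "real \<Rightarrow> real"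
  assumes k: "continuous_on UNIV k" and s: "s \<ge> 0"
  shows "(\<Sum>j<n. integral {a + real j * s .. a + real (Suc j) * s} k) = integral {a .. a + real n * s} k"
proof (induction n)
  case (Suc n)
  have "(\<Sum>j<Suc n. integral {a + real j * s .. a + real (Suc j) * s} k)
      = integral {a .. a + real n * s} k + integral {a + real n * s .. a + real (Suc n) * s} k"
    using Suc by simp
  also have "\<dots> = integral {a .. a + real (Suc n) * s} k"
    using s by (intro Henstock_Kurzweil_Integration.integral_combine continuous_on_UNIV_integrable_on k)
      (auto intro: mult_right_mono)
  finally show ?case .
qed simp

lemma integral_sum_integer_shifts:
  fixes k :: "real \<Rightarrow> real"
  assumes k: "continuous_on UNIV k"
  shows "integral {0..1} (\<lambda>u. \<Sum>j<n. k (u + real j)) = integral {0..real n} k"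
proof -
  have shift: "integral {0..1} (\<lambda>u. k (u + real j)) = integral {0 + real j * 1 .. 0 + real (Suc j) * 1} k" for j
    using integral_shift_real_ivl[of "real j" "real j" "1 + real j" k] by simp
  have "integral {0..1} (\<lambda>u. \<Sum>j<n. k (u + real j)) = (\<Sum>j<n. integral {0..1} (\<lambda>u. k (u + real j)))"
  proof (rule integral_sum)
    show "(\<lambda>u. k (u + real j)) integrable_on {0..1}" for j
      by (intro continuous_on_UNIV_integrable_on continuous_on_compose2[OF k]) (auto intro: continuous_intros)
  qed simp
  also have "\<dots> = integral {0 .. 0 + real n * 1} k"
    unfolding shift by (rule integral_consecutive_intervals[OF k]) simp
  finally show ?thesis by simp
qed

lemma integral_periodic_window:
  fixes k :: "real \<Rightarrow> real"
  assumes k: "continuous_on UNIV k" and p: "p > 0" and per: "\<And>x. k (x + p) = k x"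
  shows "integral {a..a+p} k = integral {0..p} k"
proof -
  define q where "q = \<lfloor>a / p\<rfloor>"
  define b where "b = a - of_int q * p"
  have "of_int q * p \<le> a" "a < (of_int q + 1) * p"
    using p floor_divide_lower[OF p, of a] floor_divide_upper[OF p, of a] unfolding q_def by auto
  then have b0: "0 \<le> b" and bp: "b < p" unfolding b_def by (auto simp: algebra_simps)
  have shifted: "integral {c + t .. c' + t} k = integral {c..c'} k" if "\<And>x. k (x + t) = k x" for c c' t
    using integral_shift_real_ivl[of "c + t" t "c' + t" k] that by simp
  have "integral {a..a+p} k = integral {b + of_int q * p .. (b + p) + of_int q * p} k"
    unfolding b_def by (simp add: algebra_simps)
  also have "\<dots> = integral {b..b+p} k"
    by (rule shifted) (use periodic_shift_int[of k p] per in auto)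
  also have "\<dots> = integral {b..p} k + integral {0 + p..b+p} k"
    using b0 bp by (simp add: Henstock_Kurzweil_Integration.integral_combine continuous_on_UNIV_integrable_on k)
  also have "integral {0 + p..b+p} k = integral {0..b} k"
    by (rule shifted) (rule per)
  also have "integral {b..p} k + integral {0..b} k = integral {0..p} k"
    using Henstock_Kurzweil_Integration.integral_combine[of 0 b p k] b0 bp continuous_on_UNIV_integrable_on[OF k]
    by (simp add: add.commute)
  finally show ?thesis .
qed

lemma integral_right_endpoint_error:
  fixes g :: "real \<Rightarrow> real"
  assumes ab: "a \<le> b" and g: "continuous_on UNIV g" and bound: "\<And>x. x \<in> {a..b} \<Longrightarrow> \<bar>g x - g b\<bar> \<le> e"
  shows "\<bar>integral {a..b} g - (b - a) * g b\<bar> \<le> e * (b - a)"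
proof -
  have "integral {a..b} (\<lambda>x. g x - g b) = integral {a..b} g - (b - a) * g b"
    using ab by (subst integral_diff) (auto intro: continuous_on_UNIV_integrable_on g)
  moreover have "continuous_on {a..b} (\<lambda>x. g x - g b)"
    by (intro continuous_intros continuous_on_subset[OF g]) simp
  then have "norm (integral {a..b} (\<lambda>x. g x - g b)) \<le> e * (b - a)"
    by (rule integral_bound[OF ab]) (use bound in auto)
  ultimately show ?thesis by simp
qed

lemma riemann_sum_error:
  fixes g :: "real \<Rightarrow> real"
  assumes g: "continuous_on UNIV g" and N: "N \<ge> 1"
    and modulus: "\<And>x y. x \<in> {0..1} \<Longrightarrow> y \<in> {0..1} \<Longrightarrow> \<bar>x - y\<bar> \<le> 1 / real N \<Longrightarrow> \<bar>g x - g y\<bar> \<le> e"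
  shows "\<bar>(\<Sum>i=1..N. g (real i / real N)) / real N - integral {0..1} g\<bar> \<le> e"
proof -
  define s where "s = 1 / real N"
  have s: "s > 0" "real N * s = 1" unfolding s_def using N by auto
  have integral_split: "integral {0..1} g = (\<Sum>j<N. integral {real j * s .. real (Suc j) * s} g)"
    using integral_consecutive_intervals[OF g less_imp_le[OF s(1)], of 0 N] s(2) by simp
  have sum_split: "(\<Sum>i=1..N. g (real i / real N)) / real N = (\<Sum>j<N. s * g (real (Suc j) * s))"
    unfolding sum_bounds_lt_plus1[symmetric, of "\<lambda>i. g (real i / real N)"] s_def
    by (simp add: sum_divide_distrib)
  have piece: "\<bar>integral {real j * s .. real (Suc j) * s} g - s * g (real (Suc j) * s)\<bar> \<le> e * s"
    if j: "j < N" for j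
  proof -
    have "real (Suc j) * s \<le> real N * s" using j s by (intro mult_right_mono) auto
    then have top: "real (Suc j) * s \<le> 1" using s(2) by simp
    have "\<bar>integral {real j * s .. real (Suc j) * s} g - (real (Suc j) * s - real j * s) * g (real (Suc j) * s)\<bar>
        \<le> e * (real (Suc j) * s - real j * s)"
    proof (rule integral_right_endpoint_error[OF _ g])
      fix x assume x: "x \<in> {real j * s .. real (Suc j) * s}"
      have "0 \<le> real j * s" using s by simp
      then have "x \<in> {0..1}" "real (Suc j) * s \<in> {0..1}" using x top by auto
      moreover have "\<bar>x - real (Suc j) * s\<bar> \<le> 1 / real N"
        using x unfolding s_def[symmetric] by (auto simp: algebra_simps)
      ultimately show "\<bar>g x - g (real (Suc j) * s)\<bar> \<le> e" by (rule modulus)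
    qed (use s in simp)
    then show ?thesis by (simp add: algebra_simps)
  qed
  have "\<bar>(\<Sum>j<N. s * g (real (Suc j) * s)) - integral {0..1} g\<bar>
      \<le> (\<Sum>j<N. \<bar>integral {real j * s .. real (Suc j) * s} g - s * g (real (Suc j) * s)\<bar>)"
    unfolding integral_split sum_subtractf[symmetric] by (subst abs_minus_commute) (rule sum_abs)
  also have "\<dots> \<le> (\<Sum>j<N. e * s)" by (rule sum_mono) (use piece in auto)
  also have "\<dots> = e" using s(2) by simp
  finally show ?thesis unfolding sum_split .
qed

lemma riemann_sum_tendsto_integral:
  fixes g :: "real \<Rightarrow> real"
  assumes g: "continuous_on UNIV g"
  shows "(\<lambda>N. (\<Sum>i=1..N. g (real i / real N)) / real N) \<longlonglongrightarrow> integral {0..1} g"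
proof (rule LIMSEQ_I)
  fix r :: real assume r: "r > 0"
  have "uniformly_continuous_on {0..1} g"
    by (rule compact_uniformly_continuous) (auto intro: continuous_on_subset[OF g])
  then obtain \<delta> where \<delta>: "\<delta> > 0"
    and uc: "\<And>x y. x \<in> {0..1} \<Longrightarrow> y \<in> {0..1} \<Longrightarrow> dist y x < \<delta> \<Longrightarrow> dist (g y) (g x) < r / 2"
    unfolding uniformly_continuous_on_def using r by (metis half_gt_zero)
  obtain N0 :: nat where N0: "1 / \<delta> < real N0" using reals_Archimedean2 by blast
  have "norm ((\<Sum>i=1..N. g (real i / real N)) / real N - integral {0..1} g) < r" if N: "N \<ge> max N0 1" for N
  proof -
    have "1 / \<delta> < real N" using N N0 of_nat_mono[of N0 N] by simp
    then have "1 / real N < \<delta>" using N \<delta> by (simp add: field_simps)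
    then have "\<bar>g x - g y\<bar> \<le> r / 2"
      if "x \<in> {0..1}" "y \<in> {0..1}" "\<bar>x - y\<bar> \<le> 1 / real N" for x y
      using uc[of y x] that by (simp add: dist_real_def)
    then have "\<bar>(\<Sum>i=1..N. g (real i / real N)) / real N - integral {0..1} g\<bar> \<le> r / 2"
      using N by (intro riemann_sum_error[OF g]) auto
    then show ?thesis using r by simp
  qed
  then show "\<exists>N0. \<forall>N\<ge>N0. norm ((\<Sum>i=1..N. g (real i / real N)) / real N - integral {0..1} g) < r"
    by blast
qed

lemma dist_S1_le: "dist_S1 x y \<le> \<bar>x - y - of_int k\<bar>"
  unfolding dist_S1_def by (rule cINF_lower) (auto intro: bdd_belowI[of _ 0])

lemma dist_S1_lessE:
  assumes "dist_S1 x y < r"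
  obtains k :: int where "\<bar>x - y - of_int k\<bar> < r"
  using assms cInf_lessD[of "range (\<lambda>k::int. \<bar>x - y - of_int k\<bar>)" r] unfolding dist_S1_def by auto

lemma grid_dist_S1_le:
  assumes N: "N \<ge> 1"
  obtains e where "e \<in> E N" "dist_S1 y e \<le> 1 / real N"
proof -
  define j where "j = \<lceil>frac y * real N\<rceil>"
  have j: "real_of_int j - 1 < frac y * real N" "frac y * real N \<le> real_of_int j"
    unfolding j_def by linarith+
  have j0: "0 \<le> j" using j(2) mult_nonneg_nonneg[OF frac_ge_0 of_nat_0_le_iff, of y N] by linarith
  define i where "i = nat j"
  have "frac y * real N \<le> 1 * real N" by (intro mult_right_mono) (simp_all add: frac_lt_1 less_imp_le)
  then have i: "real i = real_of_int j" "i \<le> N" unfolding i_def using j0 j(1) by linarith+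
  have close: "\<bar>y - real i / real N - of_int \<lfloor>y\<rfloor>\<bar> \<le> 1 / real N"
  proof -
    have "y - real i / real N - of_int \<lfloor>y\<rfloor> = (frac y * real N - real_of_int j) / real N"
      using N i(1) by (simp add: frac_def field_simps)
    moreover have "\<bar>frac y * real N - real_of_int j\<bar> \<le> 1" using j by linarith
    ultimately show ?thesis using N by (simp add: divide_right_mono)
  qed
  show thesis
  proof (cases "i = 0")
    case True
    have "1 \<in> E N" unfolding E_def using N by (auto intro!: exI[of _ N])
    moreover have "dist_S1 y 1 \<le> \<bar>y - 1 - of_int (\<lfloor>y\<rfloor> - 1)\<bar>" by (rule dist_S1_le)
    with close True have "dist_S1 y 1 \<le> 1 / real N" by simp
    ultimately show thesis by (rule that)
  next
    case False
    then have "real i / real N \<in> E N" unfolding E_def using i(2) by auto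
    moreover have "dist_S1 y (real i / real N) \<le> 1 / real N"
      using dist_S1_le[of y "real i / real N" "\<lfloor>y\<rfloor>"] close by simp
    ultimately show thesis by (rule that)
  qed
qed

lemma projection_close:
  assumes P: "is_projection P" and N: "N \<ge> 1"
  obtains k :: int where "\<bar>P N y - y - of_int k\<bar> < 2 / real N"
proof -
  obtain e where e: "e \<in> E N" "dist_S1 y e \<le> 1 / real N" using grid_dist_S1_le[OF N] by blast
  have "dist_S1 y (P N y) \<le> dist_S1 y e" using P N e(1) unfolding is_projection_def by blast
  also have "\<dots> < 2 / real N"
    using e(2) divide_strict_right_mono[of 1 2 "real N"] N by simp
  finally obtain k where "\<bar>y - P N y - of_int k\<bar> < 2 / real N" by (rule dist_S1_lessE)
  then have "\<bar>P N y - y - of_int (- k)\<bar> < 2 / real N" by (simp add: abs_minus_commute algebra_simps)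
  then show thesis by (rule that)
qed

lemma grid_average_difference_tendsto_zero:
  fixes \<phi> :: "real \<Rightarrow> real" and T :: "nat \<Rightarrow> real \<Rightarrow> real" and S :: "real \<Rightarrow> real"
  assumes cont: "continuous_on UNIV \<phi>" and per: "\<And>x. \<phi> (x + 1) = \<phi> x"
    and close: "\<And>N x. N \<ge> 1 \<Longrightarrow> \<exists>k::int. \<bar>T N x - S x - of_int k\<bar> \<le> C / real N"
  shows "(\<lambda>N. (\<Sum>i=1..N. \<phi> (T N (real i / real N)) - \<phi> (S (real i / real N))) / real N) \<longlonglongrightarrow> 0"
proof (rule LIMSEQ_I)
  fix r :: real assume r: "r > 0"
  obtain \<delta> where \<delta>: "\<delta> > 0" and modulus: "\<And>a b (k::int). \<bar>a - b - of_int k\<bar> < \<delta> \<Longrightarrow> \<bar>\<phi> a - \<phi> b\<bar> < r / 2"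
    using periodic_uniform_modulus[OF cont per, of "r / 2"] r by auto
  obtain N0 :: nat where N0: "\<bar>C\<bar> / \<delta> < real N0" using reals_Archimedean2 by blast
  have "norm ((\<Sum>i=1..N. \<phi> (T N (real i / real N)) - \<phi> (S (real i / real N))) / real N - 0) < r"
    if N: "N \<ge> max N0 1" for N
  proof -
    have "\<bar>C\<bar> / \<delta> < real N" using N N0 of_nat_mono[of N0 N] by simp
    then have "C < \<delta> * real N" using \<delta> abs_ge_self[of C] by (simp add: field_simps)
    then have "C / real N < \<delta>" using N by (simp add: field_simps)
    have each: "\<bar>\<phi> (T N x) - \<phi> (S x)\<bar> \<le> r / 2" for x
    proof -
      obtain k :: int where "\<bar>T N x - S x - of_int k\<bar> \<le> C / real N" using close[of N x] N by auto
      with \<open>C / real N < \<delta>\<close> show ?thesis using modulus[of "T N x" "S x" k] by simp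
    qed
    have "\<bar>\<Sum>i=1..N. \<phi> (T N (real i / real N)) - \<phi> (S (real i / real N))\<bar> \<le> (\<Sum>i=1..N. r / 2)"
      by (rule order_trans[OF sum_abs sum_mono]) (rule each)
    then have "\<bar>\<Sum>i=1..N. \<phi> (T N (real i / real N)) - \<phi> (S (real i / real N))\<bar> / real N \<le> r / 2"
      using N by (simp add: divide_le_eq mult.commute)
    then show ?thesis using r by (simp only: real_norm_def diff_zero abs_divide abs_of_nat)
  qed
  then show "\<exists>N0. \<forall>N\<ge>N0. norm ((\<Sum>i=1..N. \<phi> (T N (real i / real N)) - \<phi> (S (real i / real N))) / real N - 0) < r"
    by blast
qed

locale expanding_lift =
  fixes F F' :: "real \<Rightarrow> real" and d :: int
  assumes F_deriv: "\<And>x. (F has_real_derivative F' x) (at x)"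
    and continuous_on_F': "continuous_on UNIV F'"
    and F'_gt_1: "\<And>x. F' x > 1"
    and F_add_1: "\<And>x. F (x + 1) = F x + of_int d"
begin

lemma F_add_int: "F (x + of_int k) = F x + of_int k * of_int d"
proof -
  have "(\<lambda>x. F x - of_int d * x) (x + of_int k * 1) = (\<lambda>x. F x - of_int d * x) x"
    by (rule periodic_shift_int) (simp add: F_add_1 algebra_simps)
  then show ?thesis by (simp add: algebra_simps)
qed

lemma F'_add_1: "F' (x + 1) = F' x"
proof -
  have "((\<lambda>x. F (x + 1)) has_real_derivative F' (x + 1) * 1) (at x)"
    by (rule DERIV_chain2[OF F_deriv]) (auto intro!: derivative_eq_intros)
  moreover have "((\<lambda>x. F (x + 1)) has_real_derivative F' x) (at x)"
    unfolding F_add_1 by (auto intro!: derivative_eq_intros F_deriv)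
  ultimately show ?thesis using DERIV_unique by fastforce
qed

lemma isCont_F: "isCont F x"
  using F_deriv DERIV_isCont by blast

lemma continuous_on_F: "continuous_on S F"
  by (simp add: isCont_F continuous_at_imp_continuous_on)

lemma F'_neq_0: "F' x \<noteq> 0"
  using F'_gt_1[of x] by linarith

lemma F_diff_ge: "a \<le> b \<Longrightarrow> b - a \<le> F b - F a"
proof (cases "a < b")
  case True
  from MVT2[OF True, of F F'] F_deriv obtain z where "F b - F a = (b - a) * F' z" by blast
  moreover have "(b - a) * 1 \<le> (b - a) * F' z" using F'_gt_1[of z] True by (intro mult_left_mono) auto
  ultimately show ?thesis by simp
qed auto

lemma F_less: "a < b \<Longrightarrow> F a < F b"
  using F_diff_ge[of a b] by simp

lemma degree_ge_1: "d \<ge> 1"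
  using F_diff_ge[of 0 1] F_add_1[of 0] by simp

lemma bij_F: "bij F"
proof (rule bijI)
  show "inj F" by (metis F_less injI not_less_iff_gr_or_eq)
  have "\<exists>x. F x = v" for v
  proof (cases "v \<ge> F 0")
    case True
    then have "v \<le> F (v - F 0)" using F_diff_ge[of 0 "v - F 0"] by simp
    with True show ?thesis using IVT'[of F 0 v "v - F 0", OF _ _ _ continuous_on_F] by auto
  next
    case False
    then have "F (v - F 0) \<le> v" using F_diff_ge[of "v - F 0" 0] by simp
    with False show ?thesis using IVT'[of F "v - F 0" v 0, OF _ _ _ continuous_on_F] by auto
  qed
  then show "surj F" by (metis surjI)
qed

definition Finv :: "real \<Rightarrow> real" where "Finv = inv F"

lemma F_Finv [simp]: "F (Finv v) = v"
  unfolding Finv_def using bij_F by (simp add: bij_is_surj surj_f_inv_f)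

lemma Finv_F [simp]: "Finv (F x) = x"
  unfolding Finv_def using bij_F by (simp add: bij_is_inj)

lemma Finv_add_int: "Finv (v + of_int k * of_int d) = Finv v + of_int k"
  using Finv_F[of "Finv v + of_int k"] by (simp add: F_add_int)

lemma continuous_on_Finv: "continuous_on S Finv"
proof -
  have "isCont Finv (F (Finv v))" for v
    by (rule isCont_inverse_function[where f = F and d = 1]) (auto simp: isCont_F)
  then show ?thesis by (simp add: continuous_at_imp_continuous_on)
qed

lemma F_lipschitz:
  obtains B where "B > 0" "\<And>a b. \<bar>F a - F b\<bar> \<le> B * \<bar>a - b\<bar>"
proof -
  have "compact (F' ` {0..1})"
    by (rule compact_continuous_image) (auto intro: continuous_on_subset[OF continuous_on_F'])
  then obtain B where "\<forall>y\<in>F' ` {0..1}. norm y \<le> B"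
    using compact_imp_bounded bounded_iff by metis
  then have B: "\<And>x. x \<in> {0..1} \<Longrightarrow> \<bar>F' x\<bar> \<le> B" by auto
  have bound: "\<bar>F' x\<bar> \<le> B" for x
    using B[of "frac x"] periodic_frac[of F', OF F'_add_1] frac_lt_1[of x] by simp
  have lip: "\<bar>F b - F a\<bar> \<le> B * \<bar>b - a\<bar>" if "a < b" for a b
  proof -
    from MVT2[OF that, of F F'] F_deriv obtain z where "F b - F a = (b - a) * F' z" by blast
    then show ?thesis using bound[of z] that by (simp add: abs_mult mult.commute mult_left_mono)
  qed
  have "\<bar>F a - F b\<bar> \<le> B * \<bar>a - b\<bar>" for a b
    using lip[of a b] lip[of b a] by (cases a b rule: linorder_cases) (auto simp: abs_minus_commute)
  moreover have "B > 0" using bound[of 0] F'_gt_1[of 0] by simp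
  ultimately show thesis using that by blast
qed

definition inv_weight :: "(real \<Rightarrow> real) \<Rightarrow> real \<Rightarrow> real" where
  "inv_weight c v = c (Finv v) / F' (Finv v)"

lemma F_frac_Finv: "F (frac (Finv v)) = v - of_int \<lfloor>Finv v\<rfloor> * of_int d"
  using F_add_int[of "Finv v" "- \<lfloor>Finv v\<rfloor>"] by (simp add: frac_def)

lemma inj_on_frac_Finv_shifts: "inj_on (\<lambda>j. frac (Finv (u + real j))) {..<nat d}"
proof (rule inj_onI)
  fix i j assume i: "i \<in> {..<nat d}" and j: "j \<in> {..<nat d}"
    and eq: "frac (Finv (u + real i)) = frac (Finv (u + real j))"
  define q where "q = \<lfloor>Finv (u + real i)\<rfloor> - \<lfloor>Finv (u + real j)\<rfloor>"
  have "F (frac (Finv (u + real i))) = F (frac (Finv (u + real j)))" using eq by simp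
  then have "real_of_int (int i - int j) = real_of_int (q * d)"
    unfolding F_frac_Finv q_def by (simp add: algebra_simps)
  then have ij: "int i - int j = q * d" by (simp only: of_int_eq_iff)
  moreover have "\<bar>int i - int j\<bar> < d" using i j by auto
  ultimately have "q = 0" using degree_ge_1 by (cases "q = 0") (auto simp: abs_mult)
  with ij show "i = j" by simp
qed

lemma transfer_preimages_bij:
  "bij_betw (\<lambda>j. frac (Finv (u + real j))) {..<nat d} {x. 0 \<le> x \<and> x < 1 \<and> F x - u \<in> \<int>}"
proof (rule bij_betw_imageI[OF inj_on_frac_Finv_shifts])
  show "(\<lambda>j. frac (Finv (u + real j))) ` {..<nat d} = {x. 0 \<le> x \<and> x < 1 \<and> F x - u \<in> \<int>}"
  proof
    show "(\<lambda>j. frac (Finv (u + real j))) ` {..<nat d} \<subseteq> {x. 0 \<le> x \<and> x < 1 \<and> F x - u \<in> \<int>}"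
      by (auto simp: F_frac_Finv frac_lt_1)
  next
    show "{x. 0 \<le> x \<and> x < 1 \<and> F x - u \<in> \<int>} \<subseteq> (\<lambda>j. frac (Finv (u + real j))) ` {..<nat d}"
    proof
      fix x assume "x \<in> {x. 0 \<le> x \<and> x < 1 \<and> F x - u \<in> \<int>}"
      then obtain i where x: "0 \<le> x" "x < 1" and i: "F x - u = of_int i" by (auto elim: Ints_cases)
      define j where "j = nat (i mod d)"
      have ij: "i = i div d * d + int j" and j: "j < nat d" unfolding j_def using degree_ge_1 by simp_all
      have "F (x + of_int (- (i div d))) = u + real j"
        using i arg_cong[OF ij, of real_of_int] F_add_int[of x "- (i div d)"] by (simp add: algebra_simps)
      then have "Finv (u + real j) = x + of_int (- (i div d))" by (metis Finv_F)
      then have "frac (Finv (u + real j)) = frac x" by (simp add: frac_def)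
      then have "frac (Finv (u + real j)) = x" using x by (simp add: frac_eq)
      with j show "x \<in> (\<lambda>j. frac (Finv (u + real j))) ` {..<nat d}" by force
    qed
  qed
qed

lemma transfer_eq_sum_inv_weight:
  assumes per: "\<And>x. c (x + 1) = c x"
  shows "transfer F F' c u = (\<Sum>j<nat d. inv_weight c (u + real j))"
proof -
  have "transfer F F' c u = (\<Sum>x\<in>{x. 0 \<le> x \<and> x < 1 \<and> F x - u \<in> \<int>}. c x / F' x)"
    unfolding transfer_def ..
  also have "\<dots> = (\<Sum>j<nat d. c (frac (Finv (u + real j))) / F' (frac (Finv (u + real j))))"
    by (rule sum.reindex_bij_betw[OF transfer_preimages_bij, symmetric])
  also have "\<dots> = (\<Sum>j<nat d. inv_weight c (u + real j))"
    unfolding inv_weight_def periodic_frac[of c, OF per] periodic_frac[of F', OF F'_add_1] ..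
  finally show ?thesis .
qed

lemma transfer_add_1: "transfer F F' c (u + 1) = transfer F F' c u"
proof -
  have "F x - (u + 1) \<in> \<int> \<longleftrightarrow> F x - u \<in> \<int>" for x
    using Ints_add[OF _ Ints_1, of "F x - (u + 1)"] Ints_diff[OF _ Ints_1, of "F x - u"]
    by (auto simp: algebra_simps)
  then show ?thesis unfolding transfer_def by simp
qed

lemma continuous_on_inv_weight:
  assumes "continuous_on UNIV c"
  shows "continuous_on UNIV (inv_weight c)"
  unfolding inv_weight_def[abs_def] using F'_neq_0
  by (intro continuous_on_divide continuous_on_compose2[OF assms continuous_on_Finv]
      continuous_on_compose2[OF continuous_on_F' continuous_on_Finv]) auto

lemma inv_weight_add_degree:
  assumes per: "\<And>x. c (x + 1) = c x"
  shows "inv_weight c (v + of_int d) = inv_weight c v"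
  using Finv_add_int[of v 1] per F'_add_1 by (simp add: inv_weight_def)

lemma continuous_on_transfer:
  assumes "continuous_on UNIV c" "\<And>x. c (x + 1) = c x"
  shows "continuous_on UNIV (transfer F F' c)"
  unfolding transfer_eq_sum_inv_weight[of c, OF assms(2), abs_def]
  by (intro continuous_on_sum continuous_on_compose2[OF continuous_on_inv_weight[OF assms(1)]]
      continuous_intros) auto

lemma integral_substitution_F:
  assumes k: "continuous_on UNIV k"
  shows "integral {F 0..F 1} k = integral {0..1} (\<lambda>x. F' x * k (F x))"
proof -
  have "((\<lambda>x. F' x *\<^sub>R k (F x)) has_integral integral {F 0..F 1} k) {0..1}"
  proof (rule has_integral_substitution[where c = "F 0" and d = "F 1"])
    show "F ` {0..1} \<subseteq> {F 0..F 1}" using F_diff_ge by fastforce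
    show "(F has_field_derivative F' x) (at x within {0..1})" for x
      using F_deriv has_field_derivative_at_within by blast
  qed (use continuous_on_subset[OF k] F_less[of 0 1] in auto)
  then show ?thesis by (simp add: integral_unique)
qed

text \<open>The sum over the \<open>d\<close> inverse branches unrolls into a single integral over the window
  \<open>[F 0, F 1]\<close> of length \<open>d\<close>, which the substitution \<open>v = F y\<close> pulls back to \<open>[0, 1]\<close>.\<close>

lemma integral_transfer_duality:
  assumes c: "continuous_on UNIV c" "\<And>x. c (x + 1) = c x"
    and \<psi>: "continuous_on UNIV \<psi>" "\<And>x. \<psi> (x + 1) = \<psi> x"
  shows "integral {0..1} (\<lambda>u. \<psi> u * transfer F F' c u) = integral {0..1} (\<lambda>y. \<psi> (F y) * c y)"
proof -
  define k where "k v = \<psi> v * inv_weight c v" for v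
  have k: "continuous_on UNIV k" unfolding k_def[abs_def]
    by (intro continuous_on_mult \<psi>(1) continuous_on_inv_weight c(1))
  have d: "real (nat d) = of_int d" using degree_ge_1 by simp
  have "(\<lambda>u. \<psi> u * transfer F F' c u) = (\<lambda>u. \<Sum>j<nat d. k (u + real j))"
    using periodic_shift_int[of \<psi> 1 _ "int _", OF \<psi>(2)]
    by (auto simp: transfer_eq_sum_inv_weight[of c, OF c(2)] k_def sum_distrib_left)
  then have "integral {0..1} (\<lambda>u. \<psi> u * transfer F F' c u) = integral {0..real (nat d)} k"
    by (simp add: integral_sum_integer_shifts[OF k])
  also have "\<dots> = integral {F 0 .. F 0 + real (nat d)} k"
    using periodic_shift_int[of \<psi> 1 _ d, OF \<psi>(2)] inv_weight_add_degree[of c, OF c(2)] degree_ge_1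
    by (intro integral_periodic_window[OF k, symmetric]) (auto simp: k_def d)
  also have "\<dots> = integral {0..1} (\<lambda>x. F' x * k (F x))"
    using F_add_1[of 0] d integral_substitution_F[OF k] by simp
  also have "(\<lambda>x. F' x * k (F x)) = (\<lambda>y. \<psi> (F y) * c y)"
    using F'_neq_0 by (auto simp: k_def inv_weight_def)
  finally show ?thesis .
qed

lemma transfer_iterate_one_continuous_periodic:
  "continuous_on UNIV ((transfer F F' ^^ m) (\<lambda>_. 1)) \<and>
   (\<forall>x. (transfer F F' ^^ m) (\<lambda>_. 1) (x + 1) = (transfer F F' ^^ m) (\<lambda>_. 1) x)"
  by (induction m) (simp_all add: continuous_on_transfer transfer_add_1)

lemma integral_transfer_iterate_duality:
  assumes "continuous_on UNIV \<psi>" "\<And>x. \<psi> (x + 1) = \<psi> x"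
  shows "integral {0..1} (\<lambda>y. \<psi> y * (transfer F F' ^^ m) (\<lambda>_. 1) y) = integral {0..1} (\<lambda>y. \<psi> ((F ^^ m) y))"
  using assms
proof (induction m arbitrary: \<psi>)
  case (Suc m)
  have \<psi>F: "continuous_on UNIV (\<lambda>x. \<psi> (F x))" "\<And>x. \<psi> (F (x + 1)) = \<psi> (F x)"
    using continuous_on_compose2[OF Suc.prems(1) continuous_on_F] periodic_shift_int[of \<psi> 1 _ d, OF Suc.prems(2)]
    by (auto simp: F_add_1)
  have "integral {0..1} (\<lambda>y. \<psi> y * (transfer F F' ^^ Suc m) (\<lambda>_. 1) y)
      = integral {0..1} (\<lambda>y. \<psi> (F y) * (transfer F F' ^^ m) (\<lambda>_. 1) y)"
    using transfer_iterate_one_continuous_periodic[of m] Suc.prems by (simp add: integral_transfer_duality)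
  also have "\<dots> = integral {0..1} (\<lambda>y. \<psi> (F ((F ^^ m) y)))"
    by (rule Suc.IH[OF \<psi>F])
  finally show ?case by (simp add: funpow_Suc_right)
qed simp

lemma continuous_on_F_iterate: "continuous_on UNIV (F ^^ m)"
  by (induction m) (auto intro: continuous_on_compose2[OF continuous_on_F] simp: id_def)

text \<open>Each discretisation step moves the orbit by at most \<open>2/N\<close>, and the Lipschitz map
  amplifies earlier errors by a bounded factor.\<close>

lemma discretization_iterate_close:
  assumes P: "is_projection P"
  shows "\<exists>C. \<forall>N\<ge>1. \<forall>x. \<exists>k::int. \<bar>(discretization F P N ^^ m) x - (F ^^ m) x - of_int k\<bar> \<le> C / real N"
proof (induction m)
  case 0
  show ?case by (intro exI[of _ 0] allI impI exI[of _ 0]) simp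
next
  case (Suc m)
  then obtain C where C: "\<And>N x. N \<ge> 1 \<Longrightarrow> \<exists>k::int. \<bar>(discretization F P N ^^ m) x - (F ^^ m) x - of_int k\<bar> \<le> C / real N"
    by blast
  obtain B where B: "B > 0" "\<And>a b. \<bar>F a - F b\<bar> \<le> B * \<bar>a - b\<bar>" using F_lipschitz by blast
  have "\<exists>k::int. \<bar>(discretization F P N ^^ Suc m) x - (F ^^ Suc m) x - of_int k\<bar> \<le> (2 + B * C) / real N"
    if N: "N \<ge> 1" for N x
  proof -
    define y where "y = (discretization F P N ^^ m) x"
    define z where "z = (F ^^ m) x"
    obtain k :: int where k: "\<bar>y - z - of_int k\<bar> \<le> C / real N" using C[OF N] unfolding y_def z_def by blast
    obtain k' :: int where k': "\<bar>P N (F y) - F y - of_int k'\<bar> < 2 / real N" by (rule projection_close[OF P N])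
    have "B * \<bar>y - (z + of_int k)\<bar> \<le> B * (C / real N)"
      using k B(1) by (intro mult_left_mono) (auto simp: algebra_simps)
    then have "\<bar>F y - F (z + of_int k)\<bar> \<le> B * (C / real N)"
      using B(2)[of y "z + of_int k"] by linarith
    then have "\<bar>F y - (F z + of_int k * of_int d)\<bar> \<le> B * C / real N" by (simp add: F_add_int)
    with k' have "\<bar>P N (F y) - F z - of_int (k' + k * d)\<bar> \<le> (2 + B * C) / real N"
      by (simp add: add_divide_distrib abs_le_iff abs_less_iff)
    then show ?thesis unfolding y_def z_def discretization_def by (intro exI[of _ "k' + k * d"]) simp
  qed
  then show ?case by blast
qed

end

theorem lemma6p5:
  fixes F F' :: "real \<Rightarrow> real" and P :: "nat \<Rightarrow> real \<Rightarrow> real" and m :: nat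
  assumes "C1_expanding_lift F F'"
    and "is_projection P"
  shows "\<forall>\<phi>::real \<Rightarrow> real. continuous_on UNIV \<phi> \<and> (\<forall>x. \<phi> (x + 1) = \<phi> x) \<longrightarrow>
           (\<lambda>N. pushforward_integral F P m N \<phi>)
             \<longlonglongrightarrow> integral {0..1} (\<lambda>y. \<phi> y * (transfer F F' ^^ m) (\<lambda>_. 1) y)"
proof (intro allI impI)
  fix \<phi> :: "real \<Rightarrow> real"
  assume "continuous_on UNIV \<phi> \<and> (\<forall>x. \<phi> (x + 1) = \<phi> x)"
  then have \<phi>: "continuous_on UNIV \<phi>" "\<And>x. \<phi> (x + 1) = \<phi> x" by auto
  from assms(1) obtain d where "expanding_lift F F' d"
    unfolding C1_expanding_lift_def expanding_lift_def by blast
  then interpret expanding_lift F F' d .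
  define g where "g = \<phi> \<circ> (F ^^ m)"
  have g: "continuous_on UNIV g"
    unfolding g_def by (rule continuous_on_compose[OF continuous_on_F_iterate continuous_on_subset[OF \<phi>(1)]]) simp
  obtain C where "\<And>N x. N \<ge> 1 \<Longrightarrow> \<exists>k::int. \<bar>(discretization F P N ^^ m) x - (F ^^ m) x - of_int k\<bar> \<le> C / real N"
    using discretization_iterate_close[OF assms(2)] by blast
  then have "(\<lambda>N. (\<Sum>i=1..N. \<phi> ((discretization F P N ^^ m) (real i / real N)) - g (real i / real N)) / real N)
      \<longlonglongrightarrow> 0"
    unfolding g_def o_def by (rule grid_average_difference_tendsto_zero[OF \<phi>])
  then have "(\<lambda>N. pushforward_integral F P m N \<phi> - (\<Sum>i=1..N. g (real i / real N)) / real N) \<longlonglongrightarrow> 0"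
    by (simp add: pushforward_integral_def sum_subtractf diff_divide_distrib)
  from tendsto_add[OF this riemann_sum_tendsto_integral[OF g]]
  have "(\<lambda>N. pushforward_integral F P m N \<phi>) \<longlonglongrightarrow> integral {0..1} g" by simp
  then show "(\<lambda>N. pushforward_integral F P m N \<phi>) \<longlonglongrightarrow> integral {0..1} (\<lambda>y. \<phi> y * (transfer F F' ^^ m) (\<lambda>_. 1) y)"
    using integral_transfer_iterate_duality[OF \<phi>] by (simp add: g_def o_def)
qed

end
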